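(* For a random threshold graph $G$ on $n\ge1$ vertices and an integer $k$ with $0\le k\le n/2$, the matching number $\nu(G)$ satisfies $$P(\nu(G)=k)=\begin{cases}\left(\tfrac12\right)^{n-1}\binom{n}{k} & k<\tfrac n2,\\[4pt] \left(\tfrac12\right)^{n-1}\binom{n-1}{\lfloor\frac{n-1}{2}\rfloor} & k=\tfrac n2.\end{cases}$$
   Context: A threshold graph on $n\ge1$ vertices is built from a base vertex $v_0$ by successively adding $v_1,\dots,v_{n-1}$, each either isolated (adjacent to no earlier vertex) or dominating (adjacent to all earlier vertices); its creation sequence $\mathrm{seq}(G)=s_1\cdots s_{n-1}$ has $s_i=1$ if $v_i$ is dominating and $s_i=0$ otherwise, and each unlabeled threshold graph on $n$ vertices corresponds to exactly one binary string of length $n-1$. A random threshold graph on $n$ vertices is one whose creation sequence is uniformly distributed over all $2^{n-1}$ binary strings of length $n-1$. $\nu(G)$ denotes the maximum number of edges in a matching of $G$. *)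

theory Defs
  imports "HOL-Probability.Probability"
begin

text \<open>A threshold graph on n = length s + 1 vertices 0,...,n-1, built from the creation
  sequence s = s_1 ... s_{n-1} (s_i = s ! (i-1)): vertex j (1 <= j <= n-1) is dominating
  (adjacent to all earlier vertices i < j) iff s_j holds, and isolated otherwise.\<close>

definition thr_adj :: "bool list \<Rightarrow> nat \<Rightarrow> nat \<Rightarrow> bool" where
  "thr_adj s u v \<longleftrightarrow>
     (u < v \<and> v \<le> length s \<and> s ! (v - 1)) \<or> (v < u \<and> u \<le> length s \<and> s ! (u - 1))"

definition thr_edges :: "bool list \<Rightarrow> nat set set" where
  "thr_edges s = {{u, v} | u v. thr_adj s u v}"

definition is_matching :: "bool list \<Rightarrow> nat set set \<Rightarrow> bool" where
  "is_matching s M \<longleftrightarrow> M \<subseteq> thr_edges s \<and> (\<forall>e\<in>M. \<forall>e'\<in>M. e \<noteq> e' \<longrightarrow> e \<inter> e' = {})"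

definition matching_number :: "bool list \<Rightarrow> nat" where
  "matching_number s = Max (card ` {M. is_matching s M})"

definition random_threshold_seq :: "nat \<Rightarrow> bool list pmf" where
  "random_threshold_seq n = pmf_of_set {s. length s = n - 1}"

end

theory Submission
  imports Defs
begin

text \<open>Appending an isolated vertex does not change the matching number. Appending a dominating
  vertex raises it by one exactly when some earlier vertex is unmatched by a maximum matching,
  i.e. when \<open>2 \<nu> < n\<close>. Hence the number of creation sequences of length \<open>m\<close> with
  \<open>\<nu> = k\<close> obeys a Pascal-type recurrence, which is also satisfied by \<open>binom (m+1) k\<close> below the
  perfect-matching threshold and by the central binomial coefficient \<open>binom m (m div 2)\<close> at it.\<close>

lemma thr_adj_bounds: "thr_adj s u v \<Longrightarrow> u \<le> length s \<and> v \<le> length s \<and> u \<noteq> v"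
  unfolding thr_adj_def by auto

lemma thr_edgeD: "e \<in> thr_edges s \<Longrightarrow> e \<subseteq> {0..length s} \<and> card e = 2"
  unfolding thr_edges_def using thr_adj_bounds by fastforce

lemma finite_thr_edge: "e \<in> thr_edges s \<Longrightarrow> finite e"
  using thr_edgeD by (metis card.infinite zero_neq_numeral)

lemma finite_thr_edges: "finite (thr_edges s)"
proof -
  have "thr_edges s \<subseteq> Pow {0..length s}" using thr_edgeD by blast
  thus ?thesis by (rule finite_subset) simp
qed

lemma finite_matchings: "finite {M. is_matching s M}"
proof -
  have "{M. is_matching s M} \<subseteq> Pow (thr_edges s)" unfolding is_matching_def by auto
  thus ?thesis using finite_thr_edges by (simp add: finite_subset)
qed

lemma finite_matching: "is_matching s M \<Longrightarrow> finite M"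
  unfolding is_matching_def using finite_thr_edges finite_subset by blast

lemma card_Union_matching:
  assumes "is_matching s M"
  shows "card (\<Union>M) = 2 * card M"
proof -
  have sub: "M \<subseteq> thr_edges s" using assms unfolding is_matching_def by auto
  have "card (\<Union>M) = sum card M"
    using assms sub finite_matching[OF assms]
    unfolding is_matching_def
    by (intro card_Union_disjoint) (auto simp: pairwise_def disjnt_def intro: finite_thr_edge)
  also have "\<dots> = sum (\<lambda>_. 2) M" using sub thr_edgeD by (intro sum.cong) auto
  finally show ?thesis by simp
qed

lemma Union_matching_subset: "is_matching s M \<Longrightarrow> \<Union>M \<subseteq> {0..length s}"
  unfolding is_matching_def using thr_edgeD by blast

lemma card_matching_le:
  assumes "is_matching s M"
  shows "2 * card M \<le> Suc (length s)"
proof -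
  have "card (\<Union>M) \<le> card {0..length s}"
    using Union_matching_subset[OF assms] by (intro card_mono) auto
  thus ?thesis using card_Union_matching[OF assms] by simp
qed

lemma is_matching_mono:
  "is_matching s M \<Longrightarrow> thr_edges s \<subseteq> thr_edges t \<Longrightarrow> is_matching t M"
  unfolding is_matching_def by auto

lemma is_matching_insert:
  assumes "is_matching s M" "e \<in> thr_edges s" "e \<inter> \<Union>M = {}"
  shows "is_matching s (insert e M)"
proof -
  have "e \<inter> e' = {} \<and> e' \<inter> e = {}" if "e' \<in> M" for e'
    using assms(3) that by blast
  thus ?thesis using assms(1,2) unfolding is_matching_def by simp
qed

lemma card_le_matching_number: "is_matching s M \<Longrightarrow> card M \<le> matching_number s"
  unfolding matching_number_def using finite_matchings by (intro Max_ge) auto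

lemma maximum_matching_exists: "\<exists>M. is_matching s M \<and> card M = matching_number s"
proof -
  have "{} \<in> {M. is_matching s M}" unfolding is_matching_def by auto
  hence "matching_number s \<in> card ` {M. is_matching s M}"
    unfolding matching_number_def using finite_matchings by (intro Max_in) auto
  thus ?thesis by auto
qed

lemma matching_number_le: "2 * matching_number s \<le> Suc (length s)"
  using maximum_matching_exists card_matching_le by metis

lemma matching_number_Nil: "matching_number [] = 0"
  using matching_number_le[of "[]"] by simp

lemma thr_adj_append_False: "thr_adj (s @ [False]) = thr_adj s"
proof (intro ext)
  fix u v
  have nth: "(s @ [False]) ! (w - 1) \<longleftrightarrow> w \<le> length s \<and> s ! (w - 1)"
    if "0 < w" "w \<le> Suc (length s)" for w
    using that by (cases "w \<le> length s") (auto simp: nth_append)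
  show "thr_adj (s @ [False]) u v = thr_adj s u v"
    unfolding thr_adj_def using nth[of u] nth[of v] by auto
qed

lemma matching_number_append_False: "matching_number (s @ [False]) = matching_number s"
  unfolding matching_number_def is_matching_def thr_edges_def thr_adj_append_False ..

lemma thr_adj_append_True:
  "thr_adj (s @ [True]) u v \<longleftrightarrow> thr_adj s u v \<or>
     (u < v \<and> v = Suc (length s)) \<or> (v < u \<and> u = Suc (length s))"
  unfolding thr_adj_def by (auto simp: nth_append)

lemma thr_edges_append_True_subset: "thr_edges s \<subseteq> thr_edges (s @ [True])"
  unfolding thr_edges_def using thr_adj_append_True by blast

lemma matching_number_le_append_True: "matching_number s \<le> matching_number (s @ [True])"
  using maximum_matching_exists[of s] is_matching_mono[OF _ thr_edges_append_True_subset]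
    card_le_matching_number by metis

text \<open>A matching uses at most one edge at the new vertex, and the others are old edges.\<close>
lemma matching_number_append_True_le: "matching_number (s @ [True]) \<le> Suc (matching_number s)"
proof -
  define N where "N = Suc (length s)"
  obtain M where M: "is_matching (s @ [True]) M" "card M = matching_number (s @ [True])"
    using maximum_matching_exists by blast
  define M' where "M' = {e\<in>M. N \<notin> e}"
  have "M' \<subseteq> thr_edges s"
  proof
    fix e assume "e \<in> M'"
    hence "e \<in> thr_edges (s @ [True])" "N \<notin> e"
      using M(1) unfolding M'_def is_matching_def by auto
    then obtain u v where "e = {u, v}" "thr_adj (s @ [True]) u v" "N \<notin> e"
      unfolding thr_edges_def by auto
    thus "e \<in> thr_edges s" unfolding thr_edges_def thr_adj_append_True N_def by auto
  qed
  hence "is_matching s M'" using M(1) unfolding is_matching_def M'_def by auto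
  moreover have "card (M - M') \<le> Suc 0"
    using M(1) finite_matching[OF M(1)] unfolding M'_def is_matching_def
    by (subst card_le_Suc0_iff_eq) auto
  moreover have "card M \<le> card M' + card (M - M')"
    by (metis Diff_partition M'_def card_Un_le mem_Collect_eq subsetI)
  ultimately show ?thesis using card_le_matching_number[of s M'] M(2) by linarith
qed

text \<open>An old vertex left unmatched by a maximum matching can be matched to the new one.\<close>
lemma matching_number_append_True_augment:
  assumes "2 * matching_number s < Suc (length s)"
  shows "Suc (matching_number s) \<le> matching_number (s @ [True])"
proof -
  define N where "N = Suc (length s)"
  obtain M where M: "is_matching s M" "card M = matching_number s"
    using maximum_matching_exists by blast
  have "card (\<Union>M) < card {0..length s}"
    using assms card_Union_matching[OF M(1)] M(2) by simp
  moreover have "finite (\<Union>M)"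
    using Union_matching_subset[OF M(1)] finite_subset by blast
  ultimately have "\<not> {0..length s} \<subseteq> \<Union>M"
    using card_mono leD by blast
  then obtain w where w: "w \<in> {0..length s}" "w \<notin> \<Union>M" by blast
  have N_unmatched: "N \<notin> \<Union>M" using Union_matching_subset[OF M(1)] N_def by auto
  have "{w, N} \<in> thr_edges (s @ [True])"
    unfolding thr_edges_def using w thr_adj_append_True[of s w N] N_def by auto
  moreover have "is_matching (s @ [True]) M"
    using M(1) thr_edges_append_True_subset by (rule is_matching_mono)
  ultimately have "is_matching (s @ [True]) (insert {w, N} M)"
    using w N_unmatched by (intro is_matching_insert) auto
  moreover have "{w, N} \<notin> M" using N_unmatched by auto
  ultimately show ?thesis
    using card_le_matching_number finite_matching[OF M(1)] M(2) by fastforce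
qed

lemma matching_number_append_True:
  "matching_number (s @ [True]) =
     (if 2 * matching_number s < Suc (length s) then Suc (matching_number s)
      else matching_number s)"
proof (cases "2 * matching_number s < Suc (length s)")
  case True
  moreover have "matching_number (s @ [True]) = Suc (matching_number s)"
    using matching_number_append_True_augment[OF True] matching_number_append_True_le[of s]
    by linarith
  ultimately show ?thesis by simp
next
  case False
  moreover have "2 * matching_number (s @ [True]) \<le> Suc (Suc (length s))"
    using matching_number_le[of "s @ [True]"] by simp
  ultimately show ?thesis
    using matching_number_append_True_le[of s] matching_number_le_append_True[of s] by simp
qed

definition seqs_with_matching_number :: "nat \<Rightarrow> nat \<Rightarrow> bool list set" where
  "seqs_with_matching_number m k = {s. length s = m \<and> matching_number s = k}"

text \<open>Sequences have length \<open>m\<close>, so the graphs have \<open>m + 1\<close> vertices.\<close>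
definition matching_count :: "nat \<Rightarrow> nat \<Rightarrow> nat" where
  "matching_count m k =
     (if 2 * k < Suc m then Suc m choose k else if 2 * k = Suc m then m choose (m div 2) else 0)"

lemma finite_lists_length: "finite {s::bool list. length s = m \<and> P s}"
proof -
  have "{s::bool list. length s = m \<and> P s} \<subseteq> {s. set s \<subseteq> UNIV \<and> length s = m}" by auto
  thus ?thesis using finite_lists_length_eq[of "UNIV :: bool set" m] finite_subset by auto
qed

lemma lists_Suc_length_snoc:
  "{s::bool list. length s = Suc m \<and> P s} =
     (\<lambda>s. s @ [False]) ` {s. length s = m \<and> P (s @ [False])} \<union>
     (\<lambda>s. s @ [True]) ` {s. length s = m \<and> P (s @ [True])}"
    (is "_ = ?F \<union> ?T")
proof (intro equalityI subsetI)
  fix s assume "s \<in> {s::bool list. length s = Suc m \<and> P s}"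
  hence s: "length s = Suc m" "P s" by auto
  then obtain xs b where "s = xs @ [b]" by (metis length_Suc_conv rev_exhaust list.distinct(1))
  with s show "s \<in> ?F \<union> ?T" by (cases b) auto
qed auto

lemma card_lists_Suc_length:
  "card {s::bool list. length s = Suc m \<and> P s} =
     card {s. length s = m \<and> P (s @ [False])} + card {s. length s = m \<and> P (s @ [True])}"
proof -
  have inj: "inj_on (\<lambda>s::bool list. s @ [b]) A" for b A by (auto simp: inj_on_def)
  show ?thesis
    unfolding lists_Suc_length_snoc using finite_lists_length
    by (subst card_Un_disjoint) (auto simp: card_image[OF inj])
qed

lemma card_seqs_with_matching_number_Suc:
  "card (seqs_with_matching_number (Suc m) k) =
     card (seqs_with_matching_number m k)
     + (if 0 < k \<and> 2 * (k - 1) < Suc m then card (seqs_with_matching_number m (k - 1)) else 0)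
     + (if Suc m \<le> 2 * k then card (seqs_with_matching_number m k) else 0)"
proof -
  let ?T = "{s::bool list. length s = m \<and> matching_number (s @ [True]) = k}"
  have T: "?T = (if 0 < k \<and> 2 * (k - 1) < Suc m then seqs_with_matching_number m (k - 1) else {})
      \<union> (if Suc m \<le> 2 * k then seqs_with_matching_number m k else {})"
    unfolding seqs_with_matching_number_def matching_number_append_True by auto
  have "finite (seqs_with_matching_number m j)" for j
    unfolding seqs_with_matching_number_def by (rule finite_lists_length)
  moreover have "seqs_with_matching_number m (k - 1) \<inter> seqs_with_matching_number m k = {}"
    if "0 < k"
    using that by (auto simp: seqs_with_matching_number_def)
  ultimately have "card ?T =
      (if 0 < k \<and> 2 * (k - 1) < Suc m then card (seqs_with_matching_number m (k - 1)) else 0)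
      + (if Suc m \<le> 2 * k then card (seqs_with_matching_number m k) else 0)"
    unfolding T by (auto simp: card_Un_disjoint)
  moreover have "card (seqs_with_matching_number (Suc m) k) =
      card (seqs_with_matching_number m k) + card ?T"
    unfolding seqs_with_matching_number_def card_lists_Suc_length
    by (simp only: matching_number_append_False)
  ultimately show ?thesis by simp
qed

lemma matching_count_Suc:
  "matching_count (Suc m) k =
     matching_count m k
     + (if 0 < k \<and> 2 * (k - 1) < Suc m then matching_count m (k - 1) else 0)
     + (if Suc m \<le> 2 * k then matching_count m k else 0)"
proof (cases k)
  case 0 thus ?thesis by (simp add: matching_count_def)
next
  case (Suc j)
  consider "2 * k < Suc m" | "2 * k = Suc m" | "2 * k = Suc (Suc m)" | "2 * k > Suc (Suc m)"
    by linarith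
  thus ?thesis
  proof cases
    case 2
    hence "m = 2 * j + 1" using Suc by simp
    moreover have "(2 * j + 1) choose j = (2 * j + 1) choose Suc j"
      using binomial_symmetric[of j "2 * j + 1"] by simp
    ultimately show ?thesis using Suc by (simp add: matching_count_def)
  qed (use Suc in \<open>auto simp: matching_count_def\<close>)
qed

lemma card_seqs_with_matching_number: "card (seqs_with_matching_number m k) = matching_count m k"
proof (induction m arbitrary: k)
  case 0
  have "seqs_with_matching_number 0 k = (if k = 0 then {[]} else {})"
    by (auto simp: seqs_with_matching_number_def matching_number_Nil)
  thus ?case by (simp add: matching_count_def)
next
  case (Suc m)
  show ?case
    by (simp only: card_seqs_with_matching_number_Suc matching_count_Suc Suc.IH)
qed

lemma prob_matching_number:
  "measure_pmf.prob (random_threshold_seq (Suc m)) {s. matching_number s = k} =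
     real (matching_count m k) / 2 ^ m"
proof -
  let ?S = "{s::bool list. length s = m}"
  have S: "?S = {s. set s \<subseteq> UNIV \<and> length s = m}" by auto
  have "finite ?S" using finite_lists_length[of m "\<lambda>_. True"] by simp
  moreover have "card ?S = 2 ^ m"
    unfolding S using card_lists_length_eq[of "UNIV :: bool set" m] by simp
  moreover have "?S \<inter> {s. matching_number s = k} = seqs_with_matching_number m k"
    unfolding seqs_with_matching_number_def by auto
  ultimately show ?thesis
    unfolding random_threshold_seq_def
    by (subst measure_pmf_of_set) (auto simp: card_seqs_with_matching_number)
qed

theorem mainTheorem7:
  fixes n k :: nat
  assumes "n \<ge> 1" and "2 * k \<le> n"
  shows "measure_pmf.prob (random_threshold_seq n) {s. matching_number s = k} =
           (if 2 * k < n then (1/2) ^ (n - 1) * real (n choose k)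
            else (1/2) ^ (n - 1) * real ((n - 1) choose ((n - 1) div 2)))"
proof -
  obtain m where n: "n = Suc m" using assms(1) by (cases n) auto
  have "measure_pmf.prob (random_threshold_seq n) {s. matching_number s = k} =
      (1/2) ^ m * real (matching_count m k)"
    unfolding n prob_matching_number by (simp add: power_one_over)
  thus ?thesis using assms(2) unfolding n matching_count_def by auto
qed

end
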